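(* Fix a level $\ell<K$ and a node $y\in\mathcal Z_\ell$, and write $y_l=\mathrm{left}(y)$, $y_r=\mathrm{right}(y)$. Let $\tilde{\boldsymbol\theta}^0\in\mathbb R^{\mathcal Z^*}$ and $\tilde{\boldsymbol\theta}=\tilde{\boldsymbol\theta}^0+\boldsymbol\delta$, with $\boldsymbol\mu^0=\tilde{\boldsymbol p}(\tilde{\boldsymbol\theta}^0)$ and $\boldsymbol\mu=\tilde{\boldsymbol p}(\tilde{\boldsymbol\theta})$, be such that: (i) $\boldsymbol\mu^0$ is coherent among all levels $k\ge\ell$; (ii) $\delta_z=0$ for every $z$ with $I_z\not\subseteq I_y$; (iii) $\boldsymbol\mu$ is coherent among all levels $k>\ell$. Let $$t=\frac{b_\ell}{B_{\ell-1}}\log\Bigl(\frac{1-\mu_y}{\mu_y}\cdot\frac{\mu_{y_l}+\mu_{y_r}}{1-\mu_{y_l}-\mu_{y_r}}\Bigr)$$ and $\tilde{\boldsymbol\theta}'=\tilde{\boldsymbol\theta}+t\,\mathbf a_y$, where $\mathbf a_y$ is the column of $\mathbf A$ indexed by $y$. Then $\boldsymbol\mu'=\tilde{\boldsymbol p}(\tilde{\boldsymbol\theta}')$ is coherent among all levels $k\ge\ell$.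
   Context: Fix an integer $K\ge1$. Let $T^*$ be the complete binary tree of depth $K$ whose nodes are intervals: the root (level $0$) has $I_{\mathit{root}}=[0,1)$, and each node $z$ at level $k<K$ with $I_z=[\alpha_z,\beta_z)$ has children $\mathrm{left}(z)$, $\mathrm{right}(z)$ at level $k+1$ with intervals $[\alpha_z,\frac{\alpha_z+\beta_z}2)$ and $[\frac{\alpha_z+\beta_z}2,\beta_z)$. Let $\mathcal Z^*$ be its node set, $\mathcal Z_k$ the nodes at level $k$, $\mathrm{level}(z)$ the level of $z$, and $\mathcal Y^*=\mathcal Z^*\setminus\mathcal Z_K$. Fix liquidity parameters $b_k>0$ ($k=0,\dots,K$) and set $B_\ell=\sum_{k=\ell+1}^K b_k$ for $\ell=-1,0,\dots,K$ (so $B_{\ell-1}=B_\ell+b_\ell$). For $\tilde{\boldsymbol\theta}\in\mathbb R^{\mathcal Z^*}$, $\tilde p_z(\tilde{\boldsymbol\theta})=e^{\tilde\theta_z/b_k}/\sum_{z'\in\mathcal Z_k}e^{\tilde\theta_{z'}/b_k}$ for $z\in\mathcal Z_k$. The constraint matrix $\mathbf A\in\mathbb R^{\mathcal Z^*\times\mathcal Y^*}$ has entries $A_{zy}=B_{\mathrm{level}(z)}$ if $z=y$, $-b_{\mathrm{level}(z)}$ if $I_z\subsetneq I_y$, and $0$ otherwise. A vector $\boldsymbol\mu\in\mathbb R^{\mathcal Z^*}$ is coherent among a set $L$ of levels if for all $k,m\in L$ with $k<m$ and all $z\in\mathcal Z_k$, $\mu_z=\sum_{u\in\mathcal Z_m:\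 I_u\subseteq I_z}\mu_u$. *)

theory Defs
  imports Complex_Main
begin

text \<open>Nodes of the complete binary tree of depth K are pairs (k, j) with k the level
  and j < 2^k the position; node (k,j) carries the dyadic interval [j/2^k, (j+1)/2^k).
  The root is (0,0); left(k,j) = (k+1,2j), right(k,j) = (k+1,2j+1).\<close>

type_synonym node = "nat \<times> nat"

definition level :: "node \<Rightarrow> nat" where
  "level z = fst z"

definition nodes_at :: "nat \<Rightarrow> node set" where
  "nodes_at k = {(k, j) | j. j < 2 ^ k}"

definition all_nodes :: "nat \<Rightarrow> node set" where
  "all_nodes K = (\<Union>k\<in>{..K}. nodes_at k)"

definition interv :: "node \<Rightarrow> real set" where
  "interv z = {real (snd z) / 2 ^ fst z ..< (real (snd z) + 1) / 2 ^ fst z}"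

definition left_child :: "node \<Rightarrow> node" where
  "left_child z = (fst z + 1, 2 * snd z)"

definition right_child :: "node \<Rightarrow> node" where
  "right_child z = (fst z + 1, 2 * snd z + 1)"

text \<open>B_l = sum_{k=l+1}^K b_k, for integer l \<ge> -1.\<close>
definition Bsum :: "nat \<Rightarrow> (nat \<Rightarrow> real) \<Rightarrow> int \<Rightarrow> real" where
  "Bsum K b l = (\<Sum>k\<in>{k. k \<le> K \<and> int k > l}. b k)"

definition ptilde :: "(nat \<Rightarrow> real) \<Rightarrow> (node \<Rightarrow> real) \<Rightarrow> node \<Rightarrow> real" where
  "ptilde b \<theta> z = exp (\<theta> z / b (level z)) /
      (\<Sum>z'\<in>nodes_at (level z). exp (\<theta> z' / b (level z)))"

definition Acol :: "nat \<Rightarrow> (nat \<Rightarrow> real) \<Rightarrow> node \<Rightarrow> node \<Rightarrow> real" where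
  "Acol K b y z =
     (if z = y then Bsum K b (int (level z))
      else if interv z \<subset> interv y then - b (level z) else 0)"

definition coherent :: "(node \<Rightarrow> real) \<Rightarrow> nat set \<Rightarrow> bool" where
  "coherent \<mu> L = (\<forall>k\<in>L. \<forall>m\<in>L. k < m \<longrightarrow>
      (\<forall>z\<in>nodes_at k. \<mu> z = (\<Sum>u\<in>{u\<in>nodes_at m. interv u \<subseteq> interv z}. \<mu> u)))"

end

theory Submission
  imports Defs
begin

(* Adding t a_y to the logits raises, at level l, only the logit of y (by t B_l / b_l), and it
   lowers, at every level k > l, the logits of all descendants of y by the same amount t. Since
   the old prices give the subtree of y the same mass at all levels k > l, the new prices there
   are the old ones times a factor that depends only on whether a node lies in the subtree, so
   coherence among the levels k > l is preserved. The value of t is the one that makes the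
   reweighted mass of y at level l equal to the reweighted mass of its subtree further down:
   this is coherence at y. Off the subtree the logits are those of theta0, so there the new
   prices are the coherent prices of theta0 scaled by the ratio of the masses outside the
   subtree, and these ratios agree at levels l and m by coherence at y. *)

section \<open>Dyadic intervals and descendants\<close>

lemma interv_subset_iff_mult:
  "interv (m, i) \<subseteq> interv (k, j) \<longleftrightarrow>
     j * 2 ^ m \<le> i * 2 ^ k \<and> (i + 1) * 2 ^ k \<le> (j + 1) * (2::nat) ^ m"
proof -
  have "real i / 2 ^ m < (real i + 1) / 2 ^ m" by (simp add: divide_strict_right_mono)
  then have "interv (m, i) \<subseteq> interv (k, j) \<longleftrightarrow>
      real j / 2 ^ k \<le> real i / 2 ^ m \<and> (real i + 1) / 2 ^ m \<le> (real j + 1) / 2 ^ k"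
    unfolding interv_def by auto
  also have "\<dots> \<longleftrightarrow>
      real (j * 2 ^ m) \<le> real (i * 2 ^ k) \<and> real ((i + 1) * 2 ^ k) \<le> real ((j + 1) * 2 ^ m)"
    by (simp add: field_simps)
  finally show ?thesis by (simp only: of_nat_le_iff)
qed

lemma interv_subset_imp_level_le:
  assumes "interv (m, i) \<subseteq> interv (k, j)" shows "k \<le> m"
proof -
  have "j * 2 ^ m \<le> i * 2 ^ k" "i * 2 ^ k + 2 ^ k \<le> j * 2 ^ m + (2::nat) ^ m"
    using assms unfolding interv_subset_iff_mult by (simp_all only: distrib_right mult_1)
  then have "(2::nat) ^ k \<le> 2 ^ m" by linarith
  then show ?thesis by simp
qed

lemma interv_subset_iff:
  "interv (m, i) \<subseteq> interv (k, j) \<longleftrightarrow> k \<le> m \<and> i div 2 ^ (m - k) = j"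
proof (cases "k \<le> m")
  case True
  then obtain d where m: "m = k + d" using le_Suc_ex by blast
  have "interv (m, i) \<subseteq> interv (k, j) \<longleftrightarrow>
      (j * 2 ^ d) * 2 ^ k \<le> i * 2 ^ k \<and> (i + 1) * 2 ^ k \<le> ((j + 1) * 2 ^ d) * 2 ^ k"
    unfolding interv_subset_iff_mult m power_add by (simp only: ac_simps)
  also have "\<dots> \<longleftrightarrow> j * 2 ^ d \<le> i \<and> i < (j + 1) * 2 ^ d"
    by (simp only: mult_le_cancel2 Suc_eq_plus1[symmetric] Suc_le_eq) simp
  also have "\<dots> \<longleftrightarrow> j \<le> i div 2 ^ d \<and> i div 2 ^ d < j + 1"
    by (simp add: less_eq_div_iff_mult_less_eq div_less_iff_less_mult)
  also have "\<dots> \<longleftrightarrow> i div 2 ^ d = j"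
    by linarith
  finally show ?thesis using m by simp
next
  case False
  then show ?thesis using interv_subset_imp_level_le by blast
qed

lemma interv_inject: "interv z = interv z' \<Longrightarrow> z = z'"
  using interv_subset_iff[of "fst z" "snd z" "fst z'" "snd z'"]
    interv_subset_iff[of "fst z'" "snd z'" "fst z" "snd z"]
  by (auto simp: prod_eq_iff)

lemma nodes_at_iff: "z \<in> nodes_at k \<longleftrightarrow> fst z = k \<and> snd z < 2 ^ k"
  unfolding nodes_at_def by (cases z) auto

lemma finite_nodes_at: "finite (nodes_at k)"
proof -
  have "nodes_at k = Pair k ` {..<2 ^ k}" unfolding nodes_at_def by auto
  then show ?thesis by simp
qed

lemma nodes_at_nonempty: "nodes_at k \<noteq> {}"
  using nodes_at_iff[of "(k, 0)"] by auto

lemma level_nodes_at: "z \<in> nodes_at k \<Longrightarrow> level z = k"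
  by (simp add: level_def nodes_at_iff)

lemma all_nodesI: "z \<in> nodes_at k \<Longrightarrow> k \<le> K \<Longrightarrow> z \<in> all_nodes K"
  unfolding all_nodes_def by auto

definition ancestor :: "nat \<Rightarrow> node \<Rightarrow> node" where
  "ancestor k u = (k, snd u div 2 ^ (fst u - k))"

definition descendants_at :: "nat \<Rightarrow> node \<Rightarrow> node set" where
  "descendants_at m z = {u \<in> nodes_at m. interv u \<subseteq> interv z}"

lemma descendants_at_subset: "descendants_at m z \<subseteq> nodes_at m"
  by (simp add: descendants_at_def)

lemma ancestor_in_nodes_at:
  assumes "u \<in> nodes_at m" "k \<le> m" shows "ancestor k u \<in> nodes_at k"
proof -
  have "snd u < 2 ^ k * 2 ^ (m - k)"
    using assms by (simp add: nodes_at_iff power_add[symmetric])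
  then show ?thesis using assms by (simp add: ancestor_def nodes_at_iff div_less_iff_less_mult)
qed

lemma ancestor_ancestor:
  assumes "u \<in> nodes_at m" "k \<le> j" "j \<le> m"
  shows "ancestor k (ancestor j u) = ancestor k u"
proof -
  have "(2::nat) ^ (m - k) = 2 ^ (m - j) * 2 ^ (j - k)"
    using assms by (simp add: power_add[symmetric])
  then show ?thesis using assms by (simp add: ancestor_def nodes_at_iff div_mult2_eq)
qed

lemma ancestor_self: "u \<in> nodes_at k \<Longrightarrow> ancestor k u = u"
  by (simp add: ancestor_def nodes_at_iff prod_eq_iff)

lemma descendants_at_eq:
  assumes "z \<in> nodes_at k" "k \<le> m"
  shows "descendants_at m z = {u \<in> nodes_at m. ancestor k u = z}"
proof -
  obtain j where z: "z = (k, j)" using assms(1) by (cases z) (simp add: nodes_at_iff)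
  show ?thesis
    using assms unfolding z descendants_at_def ancestor_def set_eq_iff
    by (simp add: split_paired_all nodes_at_iff interv_subset_iff) blast
qed

lemma descendants_at_self: "z \<in> nodes_at k \<Longrightarrow> descendants_at k z = {z}"
  by (auto simp: descendants_at_eq ancestor_self)

lemma descendants_at_children:
  assumes "y \<in> nodes_at l"
  shows "descendants_at (Suc l) y = {left_child y, right_child y}"
proof -
  obtain j where y: "y = (l, j)" using assms by (cases y) (simp add: nodes_at_iff)
  have div2: "i div 2 = j \<longleftrightarrow> i = 2 * j \<or> i = 2 * j + 1" for i :: nat by presburger
  have "descendants_at (Suc l) y = {u \<in> nodes_at (Suc l). snd u div 2 = j}"
    using assms by (auto simp: descendants_at_eq ancestor_def y prod_eq_iff nodes_at_iff)
  also have "\<dots> = {(Suc l, 2 * j), (Suc l, 2 * j + 1)}"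
    using assms unfolding div2 by (auto simp: y nodes_at_iff)
  finally show ?thesis by (simp add: y left_child_def right_child_def)
qed

lemma descendants_at_root: "descendants_at m (0, 0) = nodes_at m"
  by (auto simp: descendants_at_eq nodes_at_iff ancestor_def)

lemma descendants_at_disjoint:
  "z \<in> nodes_at k \<Longrightarrow> z' \<in> nodes_at k \<Longrightarrow> z \<noteq> z' \<Longrightarrow> k \<le> m \<Longrightarrow>
     descendants_at m z \<inter> descendants_at m z' = {}"
  by (auto simp: descendants_at_eq)

lemma descendants_at_nonempty:
  assumes "z \<in> nodes_at k" "k \<le> m" shows "descendants_at m z \<noteq> {}"
proof -
  have "snd z * 2 ^ (m - k) < 2 ^ k * 2 ^ (m - k)"
    using assms by (simp add: nodes_at_iff)
  then have "(m, snd z * 2 ^ (m - k)) \<in> descendants_at m z"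
    using assms by (auto simp: descendants_at_eq ancestor_def nodes_at_iff power_add[symmetric])
  then show ?thesis by blast
qed

lemma descendants_at_psubset:
  assumes "0 < k" "z \<in> nodes_at k" "k \<le> m" shows "descendants_at m z \<subset> nodes_at m"
proof -
  define z' where "z' = (k, if snd z = 0 then 1 else 0 :: nat)"
  have "(2::nat) ^ 1 \<le> 2 ^ k" using assms by (intro power_increasing) auto
  then have z': "z' \<in> nodes_at k" "z' \<noteq> z"
    using assms by (auto simp: z'_def nodes_at_iff prod_eq_iff)
  then obtain u where "u \<in> descendants_at m z'" using descendants_at_nonempty assms by blast
  then show ?thesis
    using descendants_at_disjoint[OF z'(1) assms(2) z'(2) assms(3)] descendants_at_subset by blast
qed

lemma descendant_iff_ancestor_descendant:
  assumes "y \<in> nodes_at l" "z \<in> nodes_at k" "l \<le> k" "k \<le> m" "u \<in> descendants_at m z"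
  shows "u \<in> descendants_at m y \<longleftrightarrow> z \<in> descendants_at k y"
  using assms ancestor_ancestor[of u m l k] by (auto simp: descendants_at_eq)

lemma sum_descendants_at_split:
  assumes "z \<in> nodes_at k" "k \<le> j" "j \<le> m"
  shows "sum f (descendants_at m z) = (\<Sum>v\<in>descendants_at j z. sum f (descendants_at m v))"
proof -
  have "ancestor j ` descendants_at m z \<subseteq> descendants_at j z"
    using assms by (auto simp: descendants_at_eq ancestor_in_nodes_at ancestor_ancestor)
  then have "sum f (descendants_at m z) =
      (\<Sum>v\<in>descendants_at j z. sum f {u \<in> descendants_at m z. ancestor j u = v})"
    by (intro sum.group[symmetric]) (auto simp: descendants_at_def finite_nodes_at)
  also have "\<dots> = (\<Sum>v\<in>descendants_at j z. sum f (descendants_at m v))"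
  proof (rule sum.cong[OF refl])
    fix v assume "v \<in> descendants_at j z"
    then have "ancestor k v = z" "v \<in> nodes_at j"
      using assms by (simp_all add: descendants_at_eq)
    then have "{u \<in> descendants_at m z. ancestor j u = v} = {u \<in> nodes_at m. ancestor j u = v}"
      using assms ancestor_ancestor[of _ m k j] by (auto simp: descendants_at_eq)
    then show "sum f {u \<in> descendants_at m z. ancestor j u = v} = sum f (descendants_at m v)"
      using descendants_at_eq[of v j m] \<open>v \<in> nodes_at j\<close> \<open>j \<le> m\<close> by simp
  qed
  finally show ?thesis .
qed

section \<open>Softmax under shifts of the logits\<close>

definition softmax :: "'a set \<Rightarrow> ('a \<Rightarrow> real) \<Rightarrow> 'a \<Rightarrow> real" where
  "softmax N f z = exp (f z) / (\<Sum>u\<in>N. exp (f u))"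

definition tilted_mass :: "real \<Rightarrow> real \<Rightarrow> real" where
  "tilted_mass p c = p * exp c / (1 - p + p * exp c)"

lemma sum_exp_pos: "finite N \<Longrightarrow> N \<noteq> {} \<Longrightarrow> 0 < (\<Sum>u\<in>N. exp (f u :: real))"
  by (intro sum_pos) auto

lemma softmax_pos: "finite N \<Longrightarrow> N \<noteq> {} \<Longrightarrow> 0 < softmax N f z"
  unfolding softmax_def using sum_exp_pos[of N f] by simp

lemma sum_softmax: "finite N \<Longrightarrow> N \<noteq> {} \<Longrightarrow> sum (softmax N f) N = 1"
  unfolding softmax_def using sum_exp_pos[of N f] by (simp add: sum_divide_distrib[symmetric])

lemma sum_softmax_complement:
  "finite N \<Longrightarrow> N \<noteq> {} \<Longrightarrow> D \<subseteq> N \<Longrightarrow> sum (softmax N f) (N - D) = 1 - sum (softmax N f) D"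
  using sum.subset_diff[of D N "softmax N f"] sum_softmax[of N f] by (simp add: finite_subset)

lemma sum_softmax_less_1:
  assumes "finite N" "D \<subset> N" shows "sum (softmax N f) D < 1"
proof -
  have "N \<noteq> {}" "N - D \<noteq> {}" using assms by auto
  then have "0 < sum (softmax N f) (N - D)"
    using assms by (intro sum_pos) (auto intro: softmax_pos)
  then show ?thesis using assms \<open>N \<noteq> {}\<close> sum_softmax_complement[of N D f] by auto
qed

lemma sum_exp_shift:
  fixes f g :: "'a \<Rightarrow> real"
  assumes "finite N" "N \<noteq> {}" "D \<subseteq> N" and g: "\<And>u. u \<in> N \<Longrightarrow> g u = f u + (if u \<in> D then c else 0)"
  defines "P \<equiv> sum (softmax N f) D"
  shows "(\<Sum>u\<in>N. exp (g u)) = (\<Sum>u\<in>N. exp (f u)) * (1 - P + P * exp c)"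
proof -
  define Z where "Z = (\<Sum>u\<in>N. exp (f u))"
  have "Z > 0" unfolding Z_def using assms sum_exp_pos by blast
  have P: "P = (\<Sum>u\<in>D. exp (f u)) / Z"
    unfolding P_def Z_def softmax_def by (simp add: sum_divide_distrib)
  have "(\<Sum>u\<in>N. exp (g u)) = (\<Sum>u\<in>N - D. exp (g u)) + (\<Sum>u\<in>D. exp (g u))"
    using assms(1,3) by (simp add: sum.subset_diff[of D N])
  also have "\<dots> = (\<Sum>u\<in>N - D. exp (f u)) + (\<Sum>u\<in>D. exp c * exp (f u))"
    using \<open>D \<subseteq> N\<close> g by (intro arg_cong2[where f="(+)"] sum.cong) (auto simp: exp_add)
  also have "\<dots> = (\<Sum>u\<in>N - D. exp (f u)) + exp c * (\<Sum>u\<in>D. exp (f u))"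
    by (simp add: sum_distrib_left)
  also have "\<dots> = Z - (\<Sum>u\<in>D. exp (f u)) + exp c * (\<Sum>u\<in>D. exp (f u))"
    using assms(1,3) by (simp add: Z_def sum.subset_diff[of D N])
  also have "\<dots> = Z * (1 - P + P * exp c)"
    using \<open>Z > 0\<close> by (simp add: P field_simps)
  finally show ?thesis unfolding Z_def .
qed

lemma softmax_shift:
  fixes f g :: "'a \<Rightarrow> real"
  assumes "finite N" "D \<subseteq> N" and g: "\<And>u. u \<in> N \<Longrightarrow> g u = f u + (if u \<in> D then c else 0)"
    and z: "z \<in> N"
  defines "P \<equiv> sum (softmax N f) D"
  shows "softmax N g z = softmax N f z * (if z \<in> D then exp c else 1) / (1 - P + P * exp c)"
  using sum_exp_shift[of N D g f c] assms by (auto simp: softmax_def exp_add)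

lemma sum_softmax_shift:
  fixes f g :: "'a \<Rightarrow> real"
  assumes "finite N" "D \<subseteq> N" and "\<And>u. u \<in> N \<Longrightarrow> g u = f u + (if u \<in> D then c else 0)"
  shows "sum (softmax N g) D = tilted_mass (sum (softmax N f) D) c"
proof -
  define P where "P = sum (softmax N f) D"
  have "sum (softmax N g) D = (\<Sum>u\<in>D. softmax N f u * exp c / (1 - P + P * exp c))"
    using assms by (intro sum.cong) (auto simp: softmax_shift[OF assms] P_def)
  then show ?thesis
    by (simp add: tilted_mass_def P_def sum_divide_distrib[symmetric] sum_distrib_right[symmetric])
qed

lemma softmax_outside:
  fixes f g :: "'a \<Rightarrow> real"
  assumes "finite N" "D \<subseteq> N" and g: "\<And>u. u \<in> N - D \<Longrightarrow> g u = f u" and z: "z \<in> N - D"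
  shows "softmax N g z * (1 - sum (softmax N f) D) = softmax N f z * (1 - sum (softmax N g) D)"
proof -
  have "N \<noteq> {}" using z by blast
  define X where "X = (\<Sum>u\<in>N - D. exp (f u))"
  have rest: "1 - sum (softmax N h) D = X / (\<Sum>u\<in>N. exp (h u))"
    if "\<And>u. u \<in> N - D \<Longrightarrow> h u = f u" for h
  proof -
    have "1 - sum (softmax N h) D = sum (softmax N h) (N - D)"
      using assms \<open>N \<noteq> {}\<close> by (simp add: sum_softmax_complement)
    also have "\<dots> = X / (\<Sum>u\<in>N. exp (h u))"
      using that unfolding X_def softmax_def by (simp add: sum_divide_distrib[symmetric])
    finally show ?thesis .
  qed
  show ?thesis
    using rest[of f] rest[of g] g z by (simp add: softmax_def)
qed

lemma tilted_mass_eq: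
  assumes "0 < p" "p < 1" "0 < q" "q < 1" and uv: "u + v = ln ((1 - p) / p * (q / (1 - q)))"
  shows "tilted_mass p u = tilted_mass q (- v)"
proof -
  have "exp u * exp v = (1 - p) / p * (q / (1 - q))"
    using assms by (simp add: exp_add[symmetric] uv)
  then have key: "p * exp u * (1 - q) = q * exp (- v) * (1 - p)"
    using assms by (simp add: exp_minus field_simps)
  have "0 < 1 - p + p * exp u" "0 < 1 - q + q * exp (- v)"
    using assms by (simp_all add: add_pos_pos)
  then show ?thesis
    unfolding tilted_mass_def using key by (simp add: frac_eq_eq algebra_simps)
qed

lemma ptilde_eq_softmax:
  "z \<in> nodes_at k \<Longrightarrow> ptilde b \<theta> z = softmax (nodes_at k) (\<lambda>u. \<theta> u / b k) z"
  by (simp add: ptilde_def softmax_def level_nodes_at)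

lemma sum_ptilde_eq_softmax:
  "D \<subseteq> nodes_at k \<Longrightarrow> sum (ptilde b \<theta>) D = sum (softmax (nodes_at k) (\<lambda>u. \<theta> u / b k)) D"
  by (intro sum.cong) (auto simp: ptilde_eq_softmax)

lemma ptilde_pos: "z \<in> nodes_at k \<Longrightarrow> 0 < ptilde b \<theta> z"
  by (simp add: ptilde_eq_softmax softmax_pos finite_nodes_at nodes_at_nonempty)

lemma sum_ptilde_nodes_at: "sum (ptilde b \<theta>) (nodes_at k) = 1"
  using sum_ptilde_eq_softmax[of "nodes_at k" k b \<theta>]
  by (simp add: sum_softmax finite_nodes_at nodes_at_nonempty)

lemma sum_ptilde_less_1: "D \<subset> nodes_at k \<Longrightarrow> sum (ptilde b \<theta>) D < 1"
  using sum_ptilde_eq_softmax[of D k b \<theta>] by (simp add: sum_softmax_less_1 finite_nodes_at)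

lemma ptilde_shift:
  assumes "D \<subseteq> nodes_at k"
    and "\<And>u. u \<in> nodes_at k \<Longrightarrow> \<theta>' u / b k = \<theta> u / b k + (if u \<in> D then c else 0)"
    and "z \<in> nodes_at k"
  defines "P \<equiv> sum (ptilde b \<theta>) D"
  shows "ptilde b \<theta>' z = ptilde b \<theta> z * (if z \<in> D then exp c else 1) / (1 - P + P * exp c)"
  using softmax_shift[OF finite_nodes_at assms(1), of "\<lambda>u. \<theta>' u / b k" "\<lambda>u. \<theta> u / b k" c z] assms
  by (simp add: ptilde_eq_softmax sum_ptilde_eq_softmax)

lemma sum_ptilde_shift:
  assumes "D \<subseteq> nodes_at k"
    and "\<And>u. u \<in> nodes_at k \<Longrightarrow> \<theta>' u / b k = \<theta> u / b k + (if u \<in> D then c else 0)"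
  shows "sum (ptilde b \<theta>') D = tilted_mass (sum (ptilde b \<theta>) D) c"
  using sum_softmax_shift[OF finite_nodes_at assms(1), of "\<lambda>u. \<theta>' u / b k" "\<lambda>u. \<theta> u / b k" c] assms
  by (simp add: sum_ptilde_eq_softmax)

lemma ptilde_outside:
  assumes "D \<subseteq> nodes_at k" and "\<And>u. u \<in> nodes_at k - D \<Longrightarrow> \<theta>' u = \<theta> u"
    and "z \<in> nodes_at k - D"
  shows "ptilde b \<theta>' z * (1 - sum (ptilde b \<theta>) D) = ptilde b \<theta> z * (1 - sum (ptilde b \<theta>') D)"
  using softmax_outside[OF finite_nodes_at assms(1), of "\<lambda>u. \<theta>' u / b k" "\<lambda>u. \<theta> u / b k" z] assms
    ptilde_eq_softmax[of z k b \<theta>] ptilde_eq_softmax[of z k b \<theta>']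
  by (simp add: sum_ptilde_eq_softmax)

section \<open>Coherence under updates of a subtree\<close>

lemma coherent_iff_descendants_at:
  "coherent \<mu> L \<longleftrightarrow>
     (\<forall>k\<in>L. \<forall>m\<in>L. k < m \<longrightarrow> (\<forall>z\<in>nodes_at k. \<mu> z = sum \<mu> (descendants_at m z)))"
  unfolding coherent_def descendants_at_def ..

lemma coherent_subset: "coherent \<mu> L \<Longrightarrow> L' \<subseteq> L \<Longrightarrow> coherent \<mu> L'"
  unfolding coherent_def by blast

lemma sum_descendants_at_coherent:
  assumes coh: "coherent \<mu> L" and "j \<in> L" "m \<in> L" "j \<le> m" and "z \<in> nodes_at k" "k \<le> j"
  shows "sum \<mu> (descendants_at m z) = sum \<mu> (descendants_at j z)"
proof (cases "j = m")
  case False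
  have "sum \<mu> (descendants_at m z) = (\<Sum>v\<in>descendants_at j z. sum \<mu> (descendants_at m v))"
    using assms by (intro sum_descendants_at_split)
  also have "\<dots> = sum \<mu> (descendants_at j z)"
    using coh assms False
    by (intro sum.cong) (auto simp: coherent_iff_descendants_at descendants_at_def)
  finally show ?thesis .
qed simp

lemma coherent_shift_subtree:
  assumes y: "y \<in> nodes_at l" and L: "\<And>k. k \<in> L \<Longrightarrow> l \<le> k"
    and coh: "coherent (ptilde b \<theta>) L"
    and shift: "\<And>k u. k \<in> L \<Longrightarrow> u \<in> nodes_at k \<Longrightarrow>
      \<theta>' u / b k = \<theta> u / b k + (if u \<in> descendants_at k y then c else 0)"
  shows "coherent (ptilde b \<theta>') L"
  unfolding coherent_iff_descendants_at
proof (intro ballI impI)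
  fix k m z assume k: "k \<in> L" and m: "m \<in> L" and "k < m" and z: "z \<in> nodes_at k"
  let ?\<mu> = "ptilde b \<theta>" and ?\<mu>' = "ptilde b \<theta>'"
  define P where "P = sum ?\<mu> (descendants_at k y)"
  define w where "w = (if z \<in> descendants_at k y then exp c else 1) / (1 - P + P * exp c)"
  have P_m: "sum ?\<mu> (descendants_at m y) = P"
    unfolding P_def using y L k m \<open>k < m\<close> by (intro sum_descendants_at_coherent[OF coh]) auto
  have "?\<mu>' u = ?\<mu> u * w" if u: "u \<in> descendants_at m z" for u
  proof -
    have "u \<in> descendants_at m y \<longleftrightarrow> z \<in> descendants_at k y"
      using descendant_iff_ancestor_descendant[OF y z] L[OF k] \<open>k < m\<close> u by simp
    then show ?thesis
      using ptilde_shift[of "descendants_at m y" m \<theta>' b \<theta> c u, OF descendants_at_subset shift[OF m]]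
        subsetD[OF descendants_at_subset u]
      by (auto simp: P_m w_def)
  qed
  then have "sum ?\<mu>' (descendants_at m z) = sum ?\<mu> (descendants_at m z) * w"
    by (simp add: sum_distrib_right)
  also have "\<dots> = ?\<mu> z * w"
    using coh k m \<open>k < m\<close> z by (simp add: coherent_iff_descendants_at)
  also have "\<dots> = ?\<mu>' z"
    using ptilde_shift[of "descendants_at k y" k \<theta>' b \<theta> c z, OF descendants_at_subset shift[OF k] z]
    by (simp add: w_def P_def mult.assoc)
  finally show "?\<mu>' z = sum ?\<mu>' (descendants_at m z)" ..
qed

lemma ptilde_eq_sum_descendants_off_subtree:
  assumes y: "y \<in> nodes_at l" and z: "z \<in> nodes_at l" "z \<noteq> y" and "l < m"
    and coh0: "coherent (ptilde b \<theta>0) {l, m}"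
    and agree: "\<And>u. u \<in> nodes_at l \<union> nodes_at m \<Longrightarrow> \<not> interv u \<subseteq> interv y \<Longrightarrow> \<theta>' u = \<theta>0 u"
    and root: "ptilde b \<theta>' y = sum (ptilde b \<theta>') (descendants_at m y)"
  shows "ptilde b \<theta>' z = sum (ptilde b \<theta>') (descendants_at m z)"
proof -
  let ?\<mu>0 = "ptilde b \<theta>0" and ?\<mu>' = "ptilde b \<theta>'"
  have agree_l: "\<theta>' u = \<theta>0 u" if "u \<in> nodes_at l - {y}" for u
    using that agree[of u] descendants_at_self[OF y] unfolding descendants_at_def by blast
  have "?\<mu>0 y < 1"
    using sum_ptilde_less_1[of "{y}" l b \<theta>0] y z by auto
  have z_eq: "?\<mu>' z * (1 - ?\<mu>0 y) = ?\<mu>0 z * (1 - ?\<mu>' y)"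
    using ptilde_outside[of "{y}" l \<theta>' \<theta>0 z b] y z agree_l by simp
  have u_eq: "?\<mu>' u * (1 - ?\<mu>0 y) = ?\<mu>0 u * (1 - ?\<mu>' y)" if u: "u \<in> descendants_at m z" for u
  proof -
    have "u \<in> nodes_at m - descendants_at m y"
      using u descendants_at_disjoint[OF z(1) y z(2), of m] \<open>l < m\<close> descendants_at_subset[of m z]
      by auto
    moreover have "?\<mu>0 y = sum ?\<mu>0 (descendants_at m y)"
      using coh0 y \<open>l < m\<close> by (simp add: coherent_iff_descendants_at)
    ultimately show ?thesis
      using ptilde_outside[of "descendants_at m y" m \<theta>' \<theta>0 u b] agree root
      by (auto simp: descendants_at_def)
  qed
  have "sum ?\<mu>' (descendants_at m z) * (1 - ?\<mu>0 y) = sum ?\<mu>0 (descendants_at m z) * (1 - ?\<mu>' y)"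
    using u_eq by (simp add: sum_distrib_right)
  also have "\<dots> = ?\<mu>0 z * (1 - ?\<mu>' y)"
    using coh0 z \<open>l < m\<close> by (simp add: coherent_iff_descendants_at)
  also have "\<dots> = ?\<mu>' z * (1 - ?\<mu>0 y)"
    by (rule z_eq[symmetric])
  finally have "sum ?\<mu>' (descendants_at m z) * (1 - ?\<mu>0 y) = ?\<mu>' z * (1 - ?\<mu>0 y)" .
  then show ?thesis using \<open>?\<mu>0 y < 1\<close> by simp
qed

lemma ptilde_eq_sum_descendants_root:
  assumes "0 < l" and y: "y \<in> nodes_at l" and "l < m"
    and coh: "coherent (ptilde b \<theta>) {Suc l, m}"
    and at_l: "\<And>u. u \<in> nodes_at l \<Longrightarrow> \<theta>' u / b l = \<theta> u / b l + (if u \<in> {y} then s else 0)"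
    and at_m: "\<And>u. u \<in> nodes_at m \<Longrightarrow>
      \<theta>' u / b m = \<theta> u / b m + (if u \<in> descendants_at m y then - t else 0)"
    and st: "s + t = ln ((1 - ptilde b \<theta> y) / ptilde b \<theta> y *
      ((ptilde b \<theta> (left_child y) + ptilde b \<theta> (right_child y)) /
       (1 - ptilde b \<theta> (left_child y) - ptilde b \<theta> (right_child y))))"
  shows "ptilde b \<theta>' y = sum (ptilde b \<theta>') (descendants_at m y)"
proof -
  let ?\<mu> = "ptilde b \<theta>"
  define S where "S = sum ?\<mu> (descendants_at (Suc l) y)"
  have children: "descendants_at (Suc l) y = {left_child y, right_child y}"
    using descendants_at_children[OF y] .
  have S_eq: "S = ?\<mu> (left_child y) + ?\<mu> (right_child y)"
    unfolding S_def children by (simp add: left_child_def right_child_def)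
  have "0 < ?\<mu> y" "?\<mu> y < 1"
    using ptilde_pos[OF y] sum_ptilde_less_1[OF descendants_at_psubset[OF \<open>0 < l\<close> y order_refl]]
    by (simp_all add: descendants_at_self[OF y])
  moreover have "0 < S"
    using children descendants_at_subset[of "Suc l" y]
      ptilde_pos[of "left_child y" "Suc l" b \<theta>] ptilde_pos[of "right_child y" "Suc l" b \<theta>]
    by (simp add: S_eq)
  moreover have "S < 1"
    unfolding S_def using descendants_at_psubset[OF \<open>0 < l\<close> y le_SucI[OF order_refl]]
    by (rule sum_ptilde_less_1)
  moreover have "s + t = ln ((1 - ?\<mu> y) / ?\<mu> y * (S / (1 - S)))"
    using st by (simp add: S_eq diff_diff_eq)
  ultimately have tilted: "tilted_mass (?\<mu> y) s = tilted_mass S (- t)"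
    by (rule tilted_mass_eq)
  have "sum ?\<mu> (descendants_at m y) = S"
    unfolding S_def using \<open>l < m\<close> y by (intro sum_descendants_at_coherent[OF coh]) auto
  then have "sum (ptilde b \<theta>') (descendants_at m y) = tilted_mass S (- t)"
    using sum_ptilde_shift[of "descendants_at m y" m \<theta>' b \<theta> "- t", OF descendants_at_subset at_m]
    by simp
  moreover have "ptilde b \<theta>' y = tilted_mass (?\<mu> y) s"
    using sum_ptilde_shift[of "{y}" l \<theta>' b \<theta> s, OF _ at_l] y by simp
  ultimately show ?thesis using tilted by simp
qed

lemma coherent_insert_level:
  assumes coh: "coherent \<mu> {k. l < k \<and> k \<le> K}"
    and at_l: "\<And>m z. l < m \<Longrightarrow> m \<le> K \<Longrightarrow> z \<in> nodes_at l \<Longrightarrow> \<mu> z = sum \<mu> (descendants_at m z)"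
  shows "coherent \<mu> {k. l \<le> k \<and> k \<le> K}"
  unfolding coherent_iff_descendants_at
proof (intro ballI impI)
  fix k m z assume k: "k \<in> {k. l \<le> k \<and> k \<le> K}" and m: "m \<in> {k. l \<le> k \<and> k \<le> K}"
    and "k < m" and z: "z \<in> nodes_at k"
  show "\<mu> z = sum \<mu> (descendants_at m z)"
  proof (cases "k = l")
    case True
    then show ?thesis using at_l m \<open>k < m\<close> z by simp
  next
    case False
    then have "k \<in> {k. l < k \<and> k \<le> K}" "m \<in> {k. l < k \<and> k \<le> K}"
      using k m \<open>k < m\<close> by auto
    then show ?thesis
      using coh \<open>k < m\<close> z unfolding coherent_iff_descendants_at by blast
  qed
qed

lemma coherent_subtree_update:
  assumes y: "y \<in> nodes_at l" and "l < K"
    and coh0: "coherent (ptilde b \<theta>0) {k. l \<le> k \<and> k \<le> K}"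
    and coh: "coherent (ptilde b \<theta>) {k. l < k \<and> k \<le> K}"
    and agree: "\<And>k u. l \<le> k \<Longrightarrow> k \<le> K \<Longrightarrow> u \<in> nodes_at k \<Longrightarrow> \<not> interv u \<subseteq> interv y \<Longrightarrow>
      \<theta>' u = \<theta>0 u"
    and at_l: "\<And>u. u \<in> nodes_at l \<Longrightarrow> \<theta>' u / b l = \<theta> u / b l + (if u \<in> {y} then s else 0)"
    and below: "\<And>k u. l < k \<Longrightarrow> k \<le> K \<Longrightarrow> u \<in> nodes_at k \<Longrightarrow>
      \<theta>' u / b k = \<theta> u / b k + (if u \<in> descendants_at k y then - t else 0)"
    and st: "s + t = ln ((1 - ptilde b \<theta> y) / ptilde b \<theta> y *
      ((ptilde b \<theta> (left_child y) + ptilde b \<theta> (right_child y)) /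
       (1 - ptilde b \<theta> (left_child y) - ptilde b \<theta> (right_child y))))"
  shows "coherent (ptilde b \<theta>') {k. l \<le> k \<and> k \<le> K}"
proof (rule coherent_insert_level)
  show "coherent (ptilde b \<theta>') {k. l < k \<and> k \<le> K}"
    by (rule coherent_shift_subtree[OF y _ coh, where \<theta>'=\<theta>' and c="- t"]) (simp_all add: below)
  have root: "ptilde b \<theta>' y = sum (ptilde b \<theta>') (descendants_at m y)" if "l < m" "m \<le> K" for m
  proof (cases "l = 0")
    case True
    then have "y = (0, 0)" using y by (simp add: nodes_at_iff prod_eq_iff)
    then show ?thesis
      using sum_ptilde_nodes_at[of b \<theta>' 0] sum_ptilde_nodes_at[of b \<theta>' m]
      by (simp add: descendants_at_root nodes_at_def)
  next
    case False
    have "coherent (ptilde b \<theta>) {Suc l, m}"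
      using that by (intro coherent_subset[OF coh]) auto
    then show ?thesis
      using False that below[of m]
      by (intro ptilde_eq_sum_descendants_root[OF _ y \<open>l < m\<close> _ at_l _ st]) simp_all
  qed
  fix m z assume "l < m" "m \<le> K" and z: "z \<in> nodes_at l"
  show "ptilde b \<theta>' z = sum (ptilde b \<theta>') (descendants_at m z)"
  proof (cases "z = y")
    case False
    have "coherent (ptilde b \<theta>0) {l, m}"
      using \<open>l < m\<close> \<open>m \<le> K\<close> by (intro coherent_subset[OF coh0]) auto
    moreover have "\<And>u. u \<in> nodes_at l \<union> nodes_at m \<Longrightarrow> \<not> interv u \<subseteq> interv y \<Longrightarrow> \<theta>' u = \<theta>0 u"
      using agree[of l] agree[of m] \<open>l < m\<close> \<open>m \<le> K\<close> by fastforce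
    ultimately show ?thesis
      using ptilde_eq_sum_descendants_off_subtree[OF y z False \<open>l < m\<close>] root \<open>l < m\<close> \<open>m \<le> K\<close>
      by blast
  qed (use root \<open>l < m\<close> \<open>m \<le> K\<close> in simp)
qed

lemma Acol_eq:
  assumes y: "y \<in> nodes_at l" and u: "u \<in> nodes_at k"
  shows "Acol K b y u =
    (if u = y then Bsum K b (int l) else if u \<in> descendants_at k y then - b k else 0)"
proof -
  have "interv u \<subset> interv y \<longleftrightarrow> interv u \<subseteq> interv y" if "u \<noteq> y"
    using that interv_inject by blast
  then show ?thesis
    using y u by (auto simp: Acol_def descendants_at_def level_nodes_at)
qed

lemma Acol_at_level:
  "y \<in> nodes_at l \<Longrightarrow> u \<in> nodes_at l \<Longrightarrow> Acol K b y u = (if u = y then Bsum K b (int l) else 0)"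
  by (simp add: Acol_eq descendants_at_self)

lemma Acol_below_level:
  assumes "y \<in> nodes_at l" "u \<in> nodes_at k" "l < k"
  shows "Acol K b y u = (if u \<in> descendants_at k y then - b k else 0)"
proof -
  have "u \<noteq> y" using assms by (auto simp: nodes_at_iff)
  then show ?thesis using assms by (simp add: Acol_eq)
qed

lemma Acol_off_subtree:
  assumes "y \<in> nodes_at l" "u \<in> nodes_at k" "\<not> interv u \<subseteq> interv y"
  shows "Acol K b y u = 0"
  using assms by (auto simp: Acol_eq descendants_at_def)

lemma Bsum_pred: "l \<le> K \<Longrightarrow> Bsum K b (int l - 1) = Bsum K b (int l) + b l"
proof -
  assume "l \<le> K"
  then have "{k. k \<le> K \<and> int l - 1 < int k} = insert l {k. k \<le> K \<and> int l < int k}" by auto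
  then show ?thesis unfolding Bsum_def by (simp add: add.commute)
qed

lemma Bsum_nonneg: "(\<And>k. k \<le> K \<Longrightarrow> 0 < b k) \<Longrightarrow> 0 \<le> Bsum K b l"
  unfolding Bsum_def by (intro sum_nonneg) (simp add: less_imp_le)

theorem lemma3:
  fixes K :: nat and b :: "nat \<Rightarrow> real" and l :: nat and y :: node
    and \<theta>0 \<delta> :: "node \<Rightarrow> real"
  assumes K: "K \<ge> 1"
    and b_pos: "\<And>k. k \<le> K \<Longrightarrow> b k > 0"
    and l: "l < K"
    and y: "y \<in> nodes_at l"
    and coh0: "coherent (ptilde b \<theta>0) {k. l \<le> k \<and> k \<le> K}"
    and delta: "\<And>z. z \<in> all_nodes K \<Longrightarrow> \<not> interv z \<subseteq> interv y \<Longrightarrow> \<delta> z = 0"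
    and coh: "coherent (ptilde b (\<lambda>z. \<theta>0 z + \<delta> z)) {k. l < k \<and> k \<le> K}"
  shows
    "let \<theta> = (\<lambda>z. \<theta>0 z + \<delta> z);
         \<mu> = ptilde b \<theta>;
         t = b l / Bsum K b (int l - 1) *
             ln ((1 - \<mu> y) / \<mu> y *
                 ((\<mu> (left_child y) + \<mu> (right_child y)) /
                  (1 - \<mu> (left_child y) - \<mu> (right_child y))));
         \<theta>' = (\<lambda>z. \<theta> z + t * Acol K b y z)
     in coherent (ptilde b \<theta>') {k. l \<le> k \<and> k \<le> K}"
proof -
  define \<theta> where "\<theta> = (\<lambda>z. \<theta>0 z + \<delta> z)"
  define t where "t = b l / Bsum K b (int l - 1) *
    ln ((1 - ptilde b \<theta> y) / ptilde b \<theta> y *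
      ((ptilde b \<theta> (left_child y) + ptilde b \<theta> (right_child y)) /
       (1 - ptilde b \<theta> (left_child y) - ptilde b \<theta> (right_child y))))"
  define \<theta>' where "\<theta>' = (\<lambda>z. \<theta> z + t * Acol K b y z)"
  have "0 < b l" using b_pos l by simp
  have B: "Bsum K b (int l - 1) = Bsum K b (int l) + b l" "0 \<le> Bsum K b (int l)"
    using Bsum_pred l Bsum_nonneg b_pos by auto
  have "coherent (ptilde b \<theta>') {k. l \<le> k \<and> k \<le> K}"
  proof (rule coherent_subtree_update[OF y l coh0,
        where s = "t * Bsum K b (int l) / b l" and t = t])
    show "coherent (ptilde b \<theta>) {k. l < k \<and> k \<le> K}" using coh by (simp add: \<theta>_def)
  next
    fix k u assume "l \<le> k" "k \<le> K" "u \<in> nodes_at k" "\<not> interv u \<subseteq> interv y"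
    then show "\<theta>' u = \<theta>0 u"
      using Acol_off_subtree[OF y] delta[OF all_nodesI] by (simp add: \<theta>'_def \<theta>_def)
  next
    fix u assume "u \<in> nodes_at l"
    then show "\<theta>' u / b l = \<theta> u / b l + (if u \<in> {y} then t * Bsum K b (int l) / b l else 0)"
      using Acol_at_level[OF y] by (simp add: \<theta>'_def add_divide_distrib)
  next
    fix k u assume "l < k" "k \<le> K" "u \<in> nodes_at k"
    then show "\<theta>' u / b k = \<theta> u / b k + (if u \<in> descendants_at k y then - t else 0)"
      using Acol_below_level[OF y] b_pos[of k] by (simp add: \<theta>'_def field_simps)
  next
    have "t * Bsum K b (int l) / b l + t = t * Bsum K b (int l - 1) / b l"
      using \<open>0 < b l\<close> B by (simp add: field_simps)
    then show "t * Bsum K b (int l) / b l + t = ln ((1 - ptilde b \<theta> y) / ptilde b \<theta> y *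
      ((ptilde b \<theta> (left_child y) + ptilde b \<theta> (right_child y)) /
       (1 - ptilde b \<theta> (left_child y) - ptilde b \<theta> (right_child y))))"
      using \<open>0 < b l\<close> B unfolding t_def by simp
  qed
  then show ?thesis unfolding Let_def \<theta>'_def t_def \<theta>_def .
qed

end
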